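(* Under the hypotheses of the striction construction (the ruling distribution of $\sigma$ has degree $d>0$ at every $t$, and $\rho_{t}X_{m-d}(t),\dotsc,\rho_{t}X_{m-1}(t)$ are linearly independent for every $t$), the differential of $\sigma$ has rank exactly $m-1$ at every singular point of $\sigma$.
   Context: Ruled submanifold: given an open interval $I$, a smooth unit-speed curve $\gamma\colon I\to\mathbb{R}^{m+n}$ and smooth vector fields $X_{1},\dotsc,X_{m-1}$ along $\gamma$ that are orthonormal at each $t$, define $\sigma(t,u^{1},\dotsc,u^{m-1})=\gamma(t)+\sum_{j=1}^{m-1}u^{j}X_{j}(t)$ on $I\times\mathbb{R}^{m-1}$. A point is singular if $d\sigma$ is not injective there. The ruling distribution is $\mathcal{D}_{t}=\operatorname{Span}(X_{j}(t))_{j=1}^{m-1}$, and $\rho_{t}X_{j}(t)=\pi^{\perp}\dot X_{j}(t)$, where $\pi^{\perp}$ is orthogonal projection onto $\mathcal{D}_{t}^{\perp}$. The degree of $\mathcal{D}$ at $t$ is the rank of the linear map $\rho_{t}\colon\mathcal{D}_{t}\to\mathcal{D}_{t}^{\perp}$, $\sum_j c_jX_j(t)\mapsto\sum_j c_j\rho_tX_j(t)$. *)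

theory Defs
  imports "HOL-Analysis.Analysis"
begin

definition smooth_curve_on :: "real set \<Rightarrow> (real \<Rightarrow> 'a::real_normed_vector) \<Rightarrow> bool" where
  "smooth_curve_on I f \<longleftrightarrow>
     (\<exists>F :: nat \<Rightarrow> real \<Rightarrow> 'a. F 0 = f \<and>
        (\<forall>k. \<forall>t\<in>I. (F k has_vector_derivative F (Suc k) t) (at t)))"

text \<open>Orthogonal projection onto the orthogonal complement of the ruling space
  D_t = span (X_1(t),...,X_(m-1)(t)), written via the orthonormal frame.\<close>
definition perp_proj :: "nat \<Rightarrow> (nat \<Rightarrow> real \<Rightarrow> 'a::euclidean_space) \<Rightarrow> real \<Rightarrow> 'a \<Rightarrow> 'a" where
  "perp_proj m X t v = v - (\<Sum>i=1..m-1. (v \<bullet> X i t) *\<^sub>R X i t)"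

definition ruling_rho :: "nat \<Rightarrow> (nat \<Rightarrow> real \<Rightarrow> 'a::euclidean_space) \<Rightarrow> real \<Rightarrow> nat \<Rightarrow> 'a" where
  "ruling_rho m X t j = perp_proj m X t (vector_derivative (X j) (at t))"

text \<open>Degree = rank of rho_t : D_t -> D_t^perp = dimension of its image,
  which is the span of the rho_t X_j(t).\<close>
definition ruling_degree :: "nat \<Rightarrow> (nat \<Rightarrow> real \<Rightarrow> 'a::euclidean_space) \<Rightarrow> real \<Rightarrow> nat" where
  "ruling_degree m X t = dim ((\<lambda>j. ruling_rho m X t j) ` {1..m-1})"

text \<open>The ruled map sigma(t,u) = gamma(t) + sum_j u^j X_j(t); coordinates of
  u in R^(m-1) are named u^1..u^(m-1) via a bijection e : {1..m-1} -> 'k.\<close>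
definition ruled_map :: "nat \<Rightarrow> (nat \<Rightarrow> 'k::finite) \<Rightarrow> (real \<Rightarrow> 'a::euclidean_space)
     \<Rightarrow> (nat \<Rightarrow> real \<Rightarrow> 'a) \<Rightarrow> real \<times> (real ^ 'k) \<Rightarrow> 'a" where
  "ruled_map m e \<gamma> X p = \<gamma> (fst p) + (\<Sum>j=1..m-1. (snd p $ e j) *\<^sub>R X j (fst p))"

end

theory Submission imports Defs begin

text \<open>At a singular point the differential of \<open>\<sigma>\<close> is a non-injective linear map on the
  \<open>m\<close>-dimensional parameter space, so its rank is at most \<open>m - 1\<close>. Conversely its partial
  derivatives along the rulings are \<open>\<partial>\<sigma>/\<partial>u\<^sup>j = X\<^sub>j(t)\<close>, which are orthonormal, so the
  rank is at least \<open>m - 1\<close>.\<close>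

lemma dim_range_less_DIM_if_not_inj:
  fixes D :: "'d::euclidean_space \<Rightarrow> 'a::euclidean_space"
  assumes "linear D" and "\<not> inj D"
  shows "dim (range D) < DIM('d)"
proof (rule ccontr)
  assume "\<not> ?thesis"
  moreover have "range D = span (D ` Basis)"
    using span_linear_image[OF assms(1), of Basis] by (simp add: span_Basis)
  ultimately have full: "DIM('d) \<le> dim (D ` Basis)"
    by (metis dim_span not_less)
  have "card (D ` Basis) \<le> card (Basis :: 'd set)"
    by (simp add: card_image_le)
  with full dim_le_card'[of "D ` Basis"]
  have card_eq: "card (D ` Basis) = card (Basis :: 'd set)"
    and "card (D ` Basis) = dim (D ` Basis)"
    by auto
  then have "independent (D ` Basis)"
    using card_eq_dim[of "D ` Basis" "D ` Basis"] by (simp add: span_superset)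
  moreover have "inj_on D Basis"
    using card_eq by (simp add: inj_on_iff_eq_card)
  ultimately have "inj_on D (span Basis)"
    using linear_inj_on_span_iff_independent_image[OF assms(1)] by blast
  with assms(2) show False
    by (simp add: span_Basis)
qed

lemma dim_image_orthonormal:
  fixes f :: "'i \<Rightarrow> 'a::euclidean_space"
  assumes "finite S"
    and orthonormal: "\<forall>i\<in>S. \<forall>j\<in>S. f i \<bullet> f j = (if i = j then 1 else 0)"
  shows "dim (f ` S) = card S"
proof -
  have "inj_on f S"
  proof (rule inj_onI)
    fix i j assume "i \<in> S" "j \<in> S" "f i = f j"
    then have "f i \<bullet> f j = 1" using orthonormal by force
    with \<open>i \<in> S\<close> \<open>j \<in> S\<close> show "i = j" using orthonormal by (metis zero_neq_one)
  qed
  moreover have "independent (f ` S)"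
  proof (rule pairwise_orthogonal_independent)
    show "pairwise orthogonal (f ` S)"
      unfolding pairwise_def orthogonal_def using orthonormal by force
    show "0 \<notin> f ` S"
      using orthonormal by force
  qed
  ultimately show ?thesis
    by (simp add: dim_eq_card_independent card_image)
qed

lemma has_derivative_ruled_map_fibre:
  fixes \<gamma> :: "real \<Rightarrow> 'a::euclidean_space" and X :: "nat \<Rightarrow> real \<Rightarrow> 'a"
    and e :: "nat \<Rightarrow> 'k::finite"
  assumes D: "(ruled_map m e \<gamma> X has_derivative D) (at p)"
  shows "D (0, v) = (\<Sum>j=1..m-1. (v $ e j) *\<^sub>R X j (fst p))"
proof -
  obtain t u where p: "p = (t, u)" by (cases p)
  let ?line = "\<lambda>s::real. p + s *\<^sub>R ((0::real), v)"
  have line: "(?line has_derivative (\<lambda>s. s *\<^sub>R ((0::real), v))) (at 0)"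
    by (auto intro!: derivative_eq_intros)
  have "(ruled_map m e \<gamma> X has_derivative D) (at (?line 0))"
    using D by (simp add: zero_prod_def[symmetric])
  from diff_chain_at[OF line this]
  have chain: "((ruled_map m e \<gamma> X \<circ> ?line) has_derivative (D \<circ> (\<lambda>s. s *\<^sub>R (0, v)))) (at 0)" .
  have restrict: "ruled_map m e \<gamma> X \<circ> ?line
      = (\<lambda>s. \<gamma> t + (\<Sum>j=1..m-1. (u $ e j + s * v $ e j) *\<^sub>R X j t))"
    by (rule ext) (simp add: ruled_map_def p)
  have "((\<lambda>s. \<gamma> t + (\<Sum>j=1..m-1. (u $ e j + s * v $ e j) *\<^sub>R X j t)) has_derivative
      (\<lambda>s. \<Sum>j=1..m-1. (s * v $ e j) *\<^sub>R X j t)) (at 0)"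
    by (auto intro!: derivative_eq_intros)
  with chain[unfolded restrict]
  have "D \<circ> (\<lambda>s. s *\<^sub>R (0, v)) = (\<lambda>s. \<Sum>j=1..m-1. (s * v $ e j) *\<^sub>R X j t)"
    by (rule has_derivative_unique)
  from fun_cong[OF this, of 1] show ?thesis
    by (simp add: p)
qed

lemma has_derivative_ruled_map_axis:
  fixes \<gamma> :: "real \<Rightarrow> 'a::euclidean_space" and X :: "nat \<Rightarrow> real \<Rightarrow> 'a"
    and e :: "nat \<Rightarrow> 'k::finite"
  assumes "(ruled_map m e \<gamma> X has_derivative D) (at p)"
    and "inj_on e {1..m-1}" and "j \<in> {1..m-1}"
  shows "D (0, axis (e j) 1) = X j (fst p)"
proof -
  have "D (0, axis (e j) 1) = (\<Sum>i=1..m-1. (axis (e j) 1 $ e i) *\<^sub>R X i (fst p))"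
    using has_derivative_ruled_map_fibre[OF assms(1)] .
  also have "\<dots> = (\<Sum>i=1..m-1. if i = j then X i (fst p) else 0)"
    using assms(2,3) by (intro sum.cong) (auto simp: axis_def inj_on_def)
  also have "\<dots> = X j (fst p)"
    using assms(3) by simp
  finally show ?thesis .
qed

theorem mainTheorem5:
  fixes I :: "real set" and m n d :: nat
    and \<gamma> :: "real \<Rightarrow> 'a::euclidean_space"
    and X :: "nat \<Rightarrow> real \<Rightarrow> 'a"
    and e :: "nat \<Rightarrow> 'k::finite"
  assumes dimA: "DIM('a) = m + n"
    and e_bij: "bij_betw e {1..m-1} (UNIV :: 'k set)"
    and I_open: "open I" and I_int: "is_interval I" and I_ne: "I \<noteq> {}"
    and \<gamma>_smooth: "smooth_curve_on I \<gamma>"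
    and unit_speed: "\<forall>t\<in>I. norm (vector_derivative \<gamma> (at t)) = 1"
    and X_smooth: "\<forall>j\<in>{1..m-1}. smooth_curve_on I (X j)"
    and X_orthonormal: "\<forall>t\<in>I. \<forall>i\<in>{1..m-1}. \<forall>j\<in>{1..m-1}.
                           X i t \<bullet> X j t = (if i = j then 1 else 0)"
    and d_pos: "d > 0"
    and degree: "\<forall>t\<in>I. ruling_degree m X t = d"
    and indep: "\<forall>t\<in>I. \<forall>c :: nat \<Rightarrow> real.
                  (\<Sum>j=m-d..m-1. c j *\<^sub>R ruling_rho m X t j) = 0 \<longrightarrow> (\<forall>j\<in>{m-d..m-1}. c j = 0)"
  shows "\<forall>p \<in> I \<times> (UNIV :: (real ^ 'k) set). \<forall>D.
           (ruled_map m e \<gamma> X has_derivative D) (at p) \<and> \<not> inj D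
           \<longrightarrow> dim (range D) = m - 1"
proof (intro ballI allI impI)
  fix p and D :: "real \<times> (real ^ 'k) \<Rightarrow> 'a"
  assume "p \<in> I \<times> (UNIV :: (real ^ 'k) set)"
    and "(ruled_map m e \<gamma> X has_derivative D) (at p) \<and> \<not> inj D"
  then have t: "fst p \<in> I" and D: "(ruled_map m e \<gamma> X has_derivative D) (at p)"
    and singular: "\<not> inj D"
    by auto
  have "CARD('k) = m - 1"
    using bij_betw_same_card[OF e_bij] by simp
  then have "dim (range D) \<le> m - 1"
    using dim_range_less_DIM_if_not_inj[OF has_derivative_linear[OF D] singular] by simp
  moreover have "(\<lambda>j. X j (fst p)) ` {1..m-1} \<subseteq> range D"
    using has_derivative_ruled_map_axis[OF D bij_betw_imp_inj_on[OF e_bij]]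
    by (metis image_subsetI rangeI)
  then have "dim ((\<lambda>j. X j (fst p)) ` {1..m-1}) \<le> dim (range D)"
    by (rule dim_subset)
  moreover have "dim ((\<lambda>j. X j (fst p)) ` {1..m-1}) = m - 1"
    using dim_image_orthonormal[of "{1..m-1}" "\<lambda>j. X j (fst p)"] X_orthonormal t by simp
  ultimately show "dim (range D) = m - 1"
    by simp
qed

end
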